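(* Let $\alpha\in(0,\frac{\pi}{2})$ and let $f:\Omega\to\mathbb{C}$ be holomorphic on an open set $\Omega\subseteq\mathbb{C}$ containing the sector $S^+_\alpha$. Then: (i) If there are $A,B\ge 0$ with $|f(z)|\le Ae^{B|z|}$ for all $z\in S^+_\alpha$, then for every $y_0\in\mathbb{R}$ $$\lim_{\varepsilon\to0^+}\int_0^\infty e^{-\varepsilon(y-y_0)^2}e^{iy^2}f(y)\,dy=e^{i\alpha}\int_0^\infty e^{i(ye^{i\alpha})^2}f(ye^{i\alpha})\,dy,$$ where both integrands (the left one for each $\varepsilon>0$) are absolutely integrable on $(0,\infty)$. (ii) If there are $A,B\ge0$ with $|f(z)|\le Ae^{B\,\mathrm{Im}(z)}$ for all $z\in S^+_\alpha$, then $$\lim_{R\to\infty}\int_0^R e^{iy^2}f(y)\,dy=e^{i\alpha}\int_0^\infty e^{i(ye^{i\alpha})^2}f(ye^{i\alpha})\,dy,$$ where the integrand on the right is absolutely integrable on $(0,\infty)$ and the integrand on the left is absolutely integrable on $(0,R)$ for every $R>0$.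
   Context: For $\alpha\in(0,\frac{\pi}{2})$, $S^+_\alpha:=\{z\in\mathbb{C}: z=0 \text{ or } 0\le \mathrm{Arg}(z)\le\alpha\}$ (closed sector). *)

theory Defs
  imports "HOL-Analysis.Analysis"
begin

definition sector_plus :: "real \<Rightarrow> complex set" where
  "sector_plus \<alpha> = {z. z = 0 \<or> (0 \<le> Arg z \<and> Arg z \<le> \<alpha>)}"

end

(*
  Both parts rotate the contour. By Cauchy's theorem on the convex sector, the integral over
  [0, R] equals the integral over the ray of angle alpha minus the integral over the arc |z| = R.
  On the ray |exp(i z^2)| = exp(-t^2 sin 2alpha) beats every exponential growth of f, so the ray
  integral converges absolutely, and it remains to show that the arc contributes nothing as
  R tends to infinity.
  (i) For 0 < eps <= cos alpha the Gaussian factor exp(-eps (z - y0)^2) is of size exp(-eps R^2)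
  on the whole arc, so the identity holds for each such eps; dominated convergence on the ray
  then lets eps tend to 0.
  (ii) Once Re z >= B the bound exp(B Im z) is absorbed by |exp(i z^2)| = exp(-2 Re z Im z), and
  with sin theta >= theta cos alpha the arc integral is O(1/R).
*)
theory Submission
  imports Defs "HOL-Complex_Analysis.Complex_Analysis" "HOL-Real_Asymp.Real_Asymp"
begin

lemma Im_rcis_mult_cis: "Im (of_real r * cis a * cis b) = r * sin (a + b)"
  by (simp add: mult.assoc cis_mult)

lemma sector_plus_iff_polar:
  assumes "0 \<le> \<alpha>" "\<alpha> \<le> pi"
  shows "z \<in> sector_plus \<alpha> \<longleftrightarrow> (\<exists>r \<theta>. 0 \<le> r \<and> 0 \<le> \<theta> \<and> \<theta> \<le> \<alpha> \<and> z = of_real r * cis \<theta>)"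
proof
  assume z: "z \<in> sector_plus \<alpha>"
  show "\<exists>r \<theta>. 0 \<le> r \<and> 0 \<le> \<theta> \<and> \<theta> \<le> \<alpha> \<and> z = of_real r * cis \<theta>"
  proof (cases "z = 0")
    case True
    then show ?thesis using assms by (intro exI[of _ 0]) auto
  next
    case False
    then show ?thesis using z
      by (intro exI[of _ "norm z"] exI[of _ "Arg z"])
         (auto simp: sector_plus_def rcis_cmod_Arg rcis_def[symmetric])
  qed
next
  assume "\<exists>r \<theta>. 0 \<le> r \<and> 0 \<le> \<theta> \<and> \<theta> \<le> \<alpha> \<and> z = of_real r * cis \<theta>"
  then obtain r \<theta> where r\<theta>: "0 \<le> r" "0 \<le> \<theta>" "\<theta> \<le> \<alpha>" "z = of_real r * cis \<theta>" by blast
  show "z \<in> sector_plus \<alpha>"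
  proof (cases "r = 0")
    case False
    moreover have "-pi < \<theta>" using r\<theta>(2) pi_gt_zero by linarith
    ultimately have "Arg z = \<theta>" using r\<theta> assms by (intro Arg_unique') (auto simp: rcis_def)
    then show ?thesis using r\<theta> by (simp add: sector_plus_def)
  qed (simp add: r\<theta> sector_plus_def)
qed

lemma rcis_in_sector_plus:
  "0 \<le> r \<Longrightarrow> 0 \<le> \<theta> \<Longrightarrow> \<theta> \<le> \<alpha> \<Longrightarrow> \<alpha> \<le> pi \<Longrightarrow> of_real r * cis \<theta> \<in> sector_plus \<alpha>"
  by (subst sector_plus_iff_polar) auto

lemma sector_plus_eq_halfplanes:
  assumes "0 < \<alpha>" "\<alpha> \<le> pi"
  shows "sector_plus \<alpha> = {z. 0 \<le> Im z \<and> Im (z * cis (-\<alpha>)) \<le> 0}"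
proof (intro set_eqI iffI)
  fix z assume "z \<in> sector_plus \<alpha>"
  then obtain r \<theta> where r\<theta>: "0 \<le> r" "0 \<le> \<theta>" "\<theta> \<le> \<alpha>" "z = of_real r * cis \<theta>"
    using sector_plus_iff_polar assms by auto
  have "0 \<le> r * sin \<theta>" "0 \<le> r * sin (\<alpha> - \<theta>)" using r\<theta> assms by (auto intro!: mult_nonneg_nonneg sin_ge_zero)
  moreover have "Im (z * cis (-\<alpha>)) = - (r * sin (\<alpha> - \<theta>))"
    using Im_rcis_mult_cis[of r \<theta> "-\<alpha>"] sin_minus[of "\<alpha> - \<theta>"] r\<theta>(4) by simp
  ultimately show "z \<in> {z. 0 \<le> Im z \<and> Im (z * cis (-\<alpha>)) \<le> 0}"
    using r\<theta>(4) by simp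
next
  fix z assume z: "z \<in> {z. 0 \<le> Im z \<and> Im (z * cis (-\<alpha>)) \<le> 0}"
  show "z \<in> sector_plus \<alpha>"
  proof (cases "z = 0")
    case False
    have "0 \<le> Arg z" using z Arg_less_0 by fastforce
    moreover have "Arg z \<le> \<alpha>"
    proof (rule ccontr)
      assume "\<not> Arg z \<le> \<alpha>"
      then have "0 < sin (Arg z - \<alpha>)" using Arg_le_pi[of z] assms by (intro sin_gt_zero) auto
      moreover have "Im (z * cis (-\<alpha>)) = norm z * sin (Arg z - \<alpha>)"
        using Im_rcis_mult_cis[of "norm z" "Arg z" "-\<alpha>"] by (simp add: rcis_def[symmetric] rcis_cmod_Arg)
      ultimately have "0 < Im (z * cis (-\<alpha>))" using False by simp
      then show False using z by simp
    qed
    ultimately show ?thesis by (simp add: sector_plus_def)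
  qed (simp add: sector_plus_def)
qed

lemma convex_sector_plus:
  assumes "0 < \<alpha>" "\<alpha> \<le> pi"
  shows "convex (sector_plus \<alpha>)"
proof -
  have "sector_plus \<alpha> = {z. \<i> \<bullet> z \<ge> 0} \<inter> {z. Complex (Im (cis (-\<alpha>))) (Re (cis (-\<alpha>))) \<bullet> z \<le> 0}"
    using assms by (auto simp: sector_plus_eq_halfplanes inner_complex_def algebra_simps)
  then show ?thesis by (simp only:) (intro convex_Int convex_halfspace_le convex_halfspace_ge)
qed

lemma sector_plus_bounds:
  assumes "z \<in> sector_plus \<alpha>" "0 \<le> \<alpha>" "\<alpha> \<le> pi"
  shows "0 \<le> Im z" "norm z * cos \<alpha> \<le> Re z"
proof -
  obtain r \<theta> where r\<theta>: "0 \<le> r" "0 \<le> \<theta>" "\<theta> \<le> \<alpha>" "z = of_real r * cis \<theta>"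
    using sector_plus_iff_polar assms by auto
  have "0 \<le> sin \<theta>" "cos \<alpha> \<le> cos \<theta>" using r\<theta> assms by (auto intro!: sin_ge_zero cos_monotone_0_pi_le)
  then show "0 \<le> Im z" "norm z * cos \<alpha> \<le> Re z"
    using r\<theta> by (auto simp: norm_mult intro: mult_left_mono)
qed

lemma sector_plus_mult_Im_le_Re:
  assumes "z \<in> sector_plus \<alpha>" "0 \<le> \<alpha>" "\<alpha> \<le> pi" "0 \<le> e" "e \<le> cos \<alpha>"
  shows "e * Im z \<le> Re z"
proof -
  have "e * Im z \<le> cos \<alpha> * norm z"
    using assms sector_plus_bounds(1)[OF assms(1-3)] abs_Im_le_cmod[of z] by (intro mult_mono) auto
  then show ?thesis using sector_plus_bounds(2)[OF assms(1-3)] by (simp add: mult.commute)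
qed

lemma contour_integral_linepath_0_ray:
  assumes "0 < R"
  shows "contour_integral (linepath 0 (of_real R * c)) h = c * integral {0..R} (\<lambda>t. h (of_real t * c))"
proof -
  have "contour_integral (linepath 0 (of_real R * c)) h
      = contour_integral (linepath 0 (of_real R)) (\<lambda>w. c * h (w * c))"
    unfolding contour_integral_integral
    by (intro integral_cong) (simp add: linepath_def scaleR_conv_of_real algebra_simps)
  also have "\<dots> = integral {0..R} (\<lambda>t. c * h (of_real t * c))"
    using assms by (subst contour_integral_linepath_Reals_eq) auto
  finally show ?thesis by simp
qed

lemma sector_contour_integral_eq:
  assumes \<alpha>: "0 < \<alpha>" "\<alpha> \<le> pi" and hol: "h holomorphic_on sector_plus \<alpha>" and R: "0 < R"
  shows "integral {0..R} (\<lambda>x. h (of_real x))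
       = cis \<alpha> * integral {0..R} (\<lambda>t. h (of_real t * cis \<alpha>)) - contour_integral (part_circlepath 0 R 0 \<alpha>) h"
proof -
  define g1 where "g1 = linepath 0 (complex_of_real R)"
  define g2 where "g2 = part_circlepath 0 R 0 \<alpha>"
  define g3 where "g3 = linepath (of_real R * cis \<alpha>) 0"
  have polar: "of_real r * cis \<theta> \<in> sector_plus \<alpha>" if "0 \<le> r" "0 \<le> \<theta>" "\<theta> \<le> \<alpha>" for r \<theta>
    using that \<alpha> by (intro rcis_in_sector_plus) auto
  have convex: "convex (sector_plus \<alpha>)" using \<alpha> by (rule convex_sector_plus)
  have "path_image g1 \<subseteq> sector_plus \<alpha>" "path_image g3 \<subseteq> sector_plus \<alpha>"
    using polar[of 0 0] polar[of R 0] polar[of R \<alpha>] R \<alpha>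
    by (simp_all add: g1_def g3_def closed_segment_subset convex)
  moreover have "path_image g2 \<subseteq> sector_plus \<alpha>"
    using R \<alpha> by (auto simp: g2_def path_image_part_circlepath' closed_segment_eq_real_ivl intro!: polar)
  ultimately have images: "path_image g1 \<subseteq> sector_plus \<alpha>" "path_image g2 \<subseteq> sector_plus \<alpha>"
    "path_image g3 \<subseteq> sector_plus \<alpha>" by blast+
  have valid: "valid_path g1" "valid_path g2" "valid_path g3" by (simp_all add: g1_def g2_def g3_def)
  have ends: "pathfinish g1 = pathstart g2" "pathfinish g2 = pathstart g3"
    by (simp_all add: g1_def g2_def g3_def cis_conv_exp)
  have cont: "continuous_on (sector_plus \<alpha>) h" using hol by (rule holomorphic_on_imp_continuous_on)
  have "h contour_integrable_on g1" "h contour_integrable_on g2" "h contour_integrable_on g3"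
    using images unfolding g1_def g2_def g3_def
    by (auto intro!: contour_integrable_continuous_linepath contour_integrable_continuous_part_circlepath
        continuous_on_subset[OF cont])
  then have "(h has_contour_integral
      (contour_integral g1 h + (contour_integral g2 h + contour_integral g3 h))) (g1 +++ g2 +++ g3)"
    using valid ends images
    by (intro has_contour_integral_join has_contour_integral_integral valid_path_join) auto
  moreover have "(h has_contour_integral 0) (g1 +++ g2 +++ g3)"
    using valid ends images convex
    by (intro Cauchy_theorem_convex_simple[OF hol]) (auto simp: valid_path_join path_image_join g1_def g3_def)
  ultimately have sum: "contour_integral g1 h + contour_integral g2 h + contour_integral g3 h = 0"
    by (simp add: has_contour_integral_unique add.assoc)
  have "contour_integral g1 h = integral {0..R} (\<lambda>x. h (of_real x))"
    unfolding g1_def using R by (subst contour_integral_linepath_Reals_eq) auto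
  moreover have "contour_integral g3 h = - (cis \<alpha> * integral {0..R} (\<lambda>t. h (of_real t * cis \<alpha>)))"
    unfolding g3_def using R
    by (simp add: contour_integral_reversepath[of "linepath 0 _", simplified] contour_integral_linepath_0_ray)
  ultimately have "integral {0..R} (\<lambda>x. h (of_real x)) + contour_integral g2 h
      - cis \<alpha> * integral {0..R} (\<lambda>t. h (of_real t * cis \<alpha>)) = 0"
    using sum by simp
  then show ?thesis unfolding g2_def by (simp add: eq_diff_eq)
qed

lemma tendsto_integral_atLeastAtMost_at_top:
  fixes F :: "real \<Rightarrow> 'a::euclidean_space"
  assumes F: "F absolutely_integrable_on {a<..}"
  shows "((\<lambda>b. integral {a..b} F) \<longlongrightarrow> integral {a<..} F) at_top"
proof -
  have F': "F absolutely_integrable_on {a..}"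
    using F by (subst absolutely_integrable_spike_set_eq[where T="{a<..}"])
      (auto intro: negligible_subset[of "{a}"])
  have "integral {a..} F = integral {a<..} F"
    by (rule integral_spike_set) (auto intro: negligible_subset[of "{a}"])
  moreover have "(LINT x:{a..b}|lebesgue. F x) = integral {a..b} F" for b
    by (intro set_lebesgue_integral_eq_integral set_integrable_subset[OF F']) auto
  moreover have "((\<lambda>b. LINT x:{a..b}|lebesgue. F x) \<longlongrightarrow> (LINT x:{a..}|lebesgue. F x)) at_top"
    by (rule tendsto_set_lebesgue_integral_at_top) (use F' in auto)
  ultimately show ?thesis using set_lebesgue_integral_eq_integral(2)[OF F'] by simp
qed

lemma quadratic_le_linear:
  fixes b q t :: real
  assumes "0 < q"
  shows "b * t - q * t^2 \<le> (b + 1)^2 / (4 * q) - t"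
proof -
  have "(b + 1)^2 / (4 * q) - t - (b * t - q * t^2) = (2 * q * t - (b + 1))^2 / (4 * q)"
    using assms by (simp add: field_simps power2_eq_square)
  moreover have "0 \<le> (2 * q * t - (b + 1))^2 / (4 * q)" using assms by simp
  ultimately show ?thesis by linarith
qed

lemma absolutely_integrable_Ioi_gaussian_bound:
  fixes F :: "real \<Rightarrow> 'a::euclidean_space"
  assumes cont: "continuous_on {0<..} F" and q: "0 < q"
    and bound: "\<And>t. 0 < t \<Longrightarrow> norm (F t) \<le> C * exp (b * t - q * t^2)"
  shows "F absolutely_integrable_on {0<..}"
proof (rule measurable_bounded_by_integrable_imp_absolutely_integrable)
  show "F \<in> borel_measurable (lebesgue_on {0<..})"
    by (rule continuous_imp_measurable_on_sets_lebesgue[OF cont]) simp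
  define K where "K = (b + 1)^2 / (4 * q)"
  have "(\<lambda>t::real. exp (- t) :: real) absolutely_integrable_on {0..}"
    using integrable_on_exp_minus_to_infinity[of 1 0] by (subst absolutely_integrable_on_iff_nonneg) auto
  then have "(\<lambda>t::real. exp (- t) :: real) absolutely_integrable_on {0<..}"
    by (rule set_integrable_subset) auto
  then have "(\<lambda>t::real. exp (- t) :: real) integrable_on {0<..}"
    by (simp add: absolutely_integrable_on_def)
  then show "(\<lambda>t. \<bar>C\<bar> * exp K * exp (- t)) integrable_on {0<..}"
    by (rule integrable_on_mult_right)
  fix t :: real assume "t \<in> {0<..}"
  then have "norm (F t) \<le> C * exp (b * t - q * t^2)" using bound by simp
  also have "\<dots> \<le> \<bar>C\<bar> * exp (b * t - q * t^2)" by (intro mult_right_mono) auto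
  also have "\<dots> \<le> \<bar>C\<bar> * exp (K - t)"
    using quadratic_le_linear[OF q, of b t] unfolding K_def by (intro mult_left_mono) auto
  also have "\<dots> = \<bar>C\<bar> * exp K * exp (- t)" by (simp add: mult.assoc flip: exp_add)
  finally show "norm (F t) \<le> \<bar>C\<bar> * exp K * exp (- t)" .
qed simp

lemma tendsto_integral_dominated_at_right:
  fixes g :: "real \<Rightarrow> 'n::euclidean_space \<Rightarrow> 'm::euclidean_space"
  assumes "0 < d"
    and int: "\<And>e. 0 < e \<Longrightarrow> e < d \<Longrightarrow> g e integrable_on S" and w: "w integrable_on S"
    and bound: "\<And>e x. 0 < e \<Longrightarrow> e < d \<Longrightarrow> x \<in> S \<Longrightarrow> norm (g e x) \<le> w x"
    and lim: "\<And>x. x \<in> S \<Longrightarrow> ((\<lambda>e. g e x) \<longlongrightarrow> g0 x) (at_right 0)"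
  shows "((\<lambda>e. integral S (g e)) \<longlongrightarrow> integral S g0) (at_right 0)"
proof (rule tendsto_at_right_sequentially[OF \<open>0 < d\<close>])
  fix X :: "nat \<Rightarrow> real"
  assume X: "\<And>n. 0 < X n" "\<And>n. X n < d" "X \<longlonglongrightarrow> 0"
  have "filterlim X (at_right 0) sequentially"
    using X by (intro tendsto_imp_filterlim_at_right) auto
  then show "(\<lambda>n. integral S (g (X n))) \<longlonglongrightarrow> integral S g0"
    using X by (intro dominated_convergence(2)[OF int w bound] filterlim_compose[OF lim]) auto
qed

lemma norm_exp_ii_power2: "norm (exp (\<i> * z^2)) = exp (- 2 * Re z * Im z)"
  by (simp add: norm_exp_eq_Re power2_eq_square)

lemma norm_gaussian_chirp:
  "norm (exp (- of_real e * (z - of_real y0)^2) * exp (\<i> * z^2))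
     = exp (- e * (Re z - y0)^2 + e * Im z ^2 - 2 * Re z * Im z)"
  by (simp add: norm_mult norm_exp_eq_Re power2_eq_square algebra_simps flip: exp_add)

text \<open>The hypothesis \<open>e * Im z \<le> Re z\<close> keeps the growth \<open>e * Im z ^ 2\<close> of the Gaussian factor
  below the decay \<open>2 * Re z * Im z\<close> of the chirp.\<close>
lemma norm_gaussian_chirp_le:
  assumes "0 \<le> Im z" "0 \<le> e" "e * Im z \<le> Re z"
  shows "norm (exp (- of_real e * (z - of_real y0)^2) * exp (\<i> * z^2)) \<le> exp (- Re z * Im z)"
    and "norm (exp (- of_real e * (z - of_real y0)^2) * exp (\<i> * z^2))
           \<le> exp (- e * norm z ^ 2 + 2 * e * \<bar>y0\<bar> * norm z)"
proof -
  have Im2: "e * Im z ^ 2 \<le> Re z * Im z"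
    using mult_right_mono[OF assms(3) assms(1)] by (simp add: power2_eq_square mult.assoc)
  have "0 \<le> e * (Re z - y0)^2" using assms by simp
  with Im2 show "norm (exp (- of_real e * (z - of_real y0)^2) * exp (\<i> * z^2)) \<le> exp (- Re z * Im z)"
    unfolding norm_gaussian_chirp by (simp add: mult.commute)
  have "Re z * y0 \<le> \<bar>Re z\<bar> * \<bar>y0\<bar>" by (simp flip: abs_mult)
  also have "\<dots> \<le> norm z * \<bar>y0\<bar>" by (intro mult_right_mono abs_Re_le_cmod) simp
  finally have "Re z * y0 \<le> norm z * \<bar>y0\<bar>" .
  then have "e * (Re z * y0) \<le> e * (norm z * \<bar>y0\<bar>)" using assms by (intro mult_left_mono)
  moreover have "0 \<le> e * y0^2" using assms by simp
  moreover have "norm z ^ 2 = Re z ^ 2 + Im z ^ 2" by (simp add: cmod_power2)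
  ultimately have "- e * (Re z - y0)^2 + e * Im z ^2 - 2 * Re z * Im z
      \<le> - e * norm z ^ 2 + 2 * e * \<bar>y0\<bar> * norm z"
    using Im2 by (simp add: power2_eq_square algebra_simps)
  then show "norm (exp (- of_real e * (z - of_real y0)^2) * exp (\<i> * z^2))
      \<le> exp (- e * norm z ^ 2 + 2 * e * \<bar>y0\<bar> * norm z)"
    unfolding norm_gaussian_chirp by simp
qed

lemma sin_ge_mult_cos:
  assumes "0 \<le> \<theta>" "\<theta> \<le> \<alpha>" "\<alpha> \<le> pi"
  shows "\<theta> * cos \<alpha> \<le> sin \<theta>"
proof (cases "\<theta> = 0")
  case False
  then have "0 < \<theta>" using assms by simp
  from MVT2[OF this DERIV_sin] obtain z where z: "0 < z" "z < \<theta>" "sin \<theta> - sin 0 = (\<theta> - 0) * cos z"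
    by auto
  have "cos \<alpha> \<le> cos z" using z assms by (intro cos_monotone_0_pi_le) auto
  then have "\<theta> * cos \<alpha> \<le> \<theta> * cos z" using assms by (intro mult_left_mono) auto
  then show ?thesis using z by simp
qed simp

lemma integral_exp_minus_le:
  fixes k a :: real
  assumes "0 < k" "0 \<le> a"
  shows "integral {0..a} (\<lambda>\<theta>. exp (- k * \<theta>)) \<le> 1 / k"
proof -
  have int: "((\<lambda>\<theta>. exp (- k * \<theta>)) has_integral exp (- k * 0) / k) {0..}"
    using has_integral_exp_minus_to_infinity[OF assms(1)] .
  have "integral {0..a} (\<lambda>\<theta>. exp (- k * \<theta>)) \<le> integral {0..} (\<lambda>\<theta>. exp (- k * \<theta>))"
    using int by (intro integral_subset_le integrable_continuous_interval continuous_intros) auto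
  also have "\<dots> = 1 / k" using int by (simp add: integral_unique)
  finally show ?thesis .
qed

lemma sector_integral_tendsto:
  assumes \<alpha>: "0 < \<alpha>" "\<alpha> \<le> pi" and hol: "h holomorphic_on sector_plus \<alpha>"
    and ray: "(\<lambda>t. h (of_real t * cis \<alpha>)) absolutely_integrable_on {0<..}"
    and arc: "((\<lambda>R. contour_integral (part_circlepath 0 R 0 \<alpha>) h) \<longlongrightarrow> 0) at_top"
  shows "((\<lambda>R. integral {0..R} (\<lambda>x. h (of_real x)))
           \<longlongrightarrow> cis \<alpha> * integral {0<..} (\<lambda>t. h (of_real t * cis \<alpha>))) at_top"
proof -
  have "((\<lambda>R. cis \<alpha> * integral {0..R} (\<lambda>t. h (of_real t * cis \<alpha>)) - contour_integral (part_circlepath 0 R 0 \<alpha>) h)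
      \<longlongrightarrow> cis \<alpha> * integral {0<..} (\<lambda>t. h (of_real t * cis \<alpha>)) - 0) at_top"
    by (intro tendsto_intros tendsto_integral_atLeastAtMost_at_top ray arc)
  moreover have "\<forall>\<^sub>F R in at_top. cis \<alpha> * integral {0..R} (\<lambda>t. h (of_real t * cis \<alpha>))
      - contour_integral (part_circlepath 0 R 0 \<alpha>) h = integral {0..R} (\<lambda>x. h (of_real x))"
    using eventually_gt_at_top[of 0] by eventually_elim (simp add: sector_contour_integral_eq[OF \<alpha> hol])
  ultimately show ?thesis by (simp add: tendsto_cong)
qed

locale sector_exponential_type =
  fixes \<alpha> A B :: real and f :: "complex \<Rightarrow> complex"
  assumes alpha: "0 < \<alpha>" "\<alpha> < pi / 2"
    and holomorphic: "f holomorphic_on sector_plus \<alpha>"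
    and nonneg: "0 \<le> A" "0 \<le> B"
    and growth: "\<And>z. z \<in> sector_plus \<alpha> \<Longrightarrow> norm (f z) \<le> A * exp (B * norm z)"
begin

definition chirp :: "complex \<Rightarrow> complex" where
  "chirp z = exp (\<i> * z^2) * f z"

definition gauss_damped :: "real \<Rightarrow> real \<Rightarrow> complex \<Rightarrow> complex" where
  "gauss_damped e y0 z = exp (- of_real e * (z - of_real y0)^2) * chirp z"

lemma gauss_damped_0 [simp]: "gauss_damped 0 y0 z = chirp z"
  by (simp add: gauss_damped_def)

lemma cos_alpha_pos: "0 < cos \<alpha>" and sin_alpha_pos: "0 < sin \<alpha>"
  using alpha by (auto intro!: cos_gt_zero sin_gt_zero)

lemma polar_in_sector: "0 \<le> r \<Longrightarrow> 0 \<le> \<theta> \<Longrightarrow> \<theta> \<le> \<alpha> \<Longrightarrow> of_real r * cis \<theta> \<in> sector_plus \<alpha>"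
  using alpha by (intro rcis_in_sector_plus) auto

lemma real_in_sector: "0 \<le> y \<Longrightarrow> complex_of_real y \<in> sector_plus \<alpha>"
  using polar_in_sector[of y 0] alpha by simp

lemma holomorphic_chirp: "chirp holomorphic_on sector_plus \<alpha>"
  unfolding chirp_def[abs_def] by (intro holomorphic_intros holomorphic)

lemma holomorphic_gauss_damped: "gauss_damped e y0 holomorphic_on sector_plus \<alpha>"
  unfolding gauss_damped_def[abs_def] by (intro holomorphic_intros holomorphic_chirp)

lemma continuous_on_gauss_damped_path:
  assumes "continuous_on S p" "p ` S \<subseteq> sector_plus \<alpha>"
  shows "continuous_on S (\<lambda>t. gauss_damped e y0 (p t))"
  using holomorphic_gauss_damped[THEN holomorphic_on_imp_continuous_on] assms
  by (rule continuous_on_compose2)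

lemma norm_gauss_damped_le:
  assumes z: "z \<in> sector_plus \<alpha>" and e: "0 \<le> e" "e * Im z \<le> Re z"
  shows "norm (gauss_damped e y0 z) \<le> A * exp (B * norm z - Re z * Im z)"
    and "norm (gauss_damped e y0 z) \<le> A * exp (B * norm z - e * norm z ^ 2 + 2 * e * \<bar>y0\<bar> * norm z)"
proof -
  have Im: "0 \<le> Im z" using sector_plus_bounds[OF z] alpha by auto
  have split: "norm (gauss_damped e y0 z)
      = norm (exp (- of_real e * (z - of_real y0)^2) * exp (\<i> * z^2)) * norm (f z)"
    by (simp add: gauss_damped_def chirp_def norm_mult)
  have f: "norm (f z) \<le> A * exp (B * norm z)" using growth[OF z] .
  have "norm (gauss_damped e y0 z) \<le> exp (- Re z * Im z) * (A * exp (B * norm z))"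
    unfolding split by (intro mult_mono norm_gaussian_chirp_le(1)[OF Im e] f) auto
  also have "\<dots> = A * exp (B * norm z - Re z * Im z)" by (simp add: exp_diff exp_minus field_simps)
  finally show "norm (gauss_damped e y0 z) \<le> A * exp (B * norm z - Re z * Im z)" .
  have "norm (gauss_damped e y0 z)
      \<le> exp (- e * norm z ^ 2 + 2 * e * \<bar>y0\<bar> * norm z) * (A * exp (B * norm z))"
    unfolding split by (intro mult_mono norm_gaussian_chirp_le(2)[OF Im e] f) auto
  also have "\<dots> = A * exp (B * norm z - e * norm z ^ 2 + 2 * e * \<bar>y0\<bar> * norm z)"
    by (simp add: mult_ac flip: exp_add)
  finally show "norm (gauss_damped e y0 z)
      \<le> A * exp (B * norm z - e * norm z ^ 2 + 2 * e * \<bar>y0\<bar> * norm z)" .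
qed

lemma norm_gauss_damped_ray_le:
  assumes "0 \<le> t" "0 \<le> e" "e \<le> cos \<alpha>"
  shows "norm (gauss_damped e y0 (of_real t * cis \<alpha>)) \<le> A * exp (B * t - cos \<alpha> * sin \<alpha> * t^2)"
  using norm_gauss_damped_le(1)[OF polar_in_sector[of t \<alpha>] assms(2)
      sector_plus_mult_Im_le_Re[OF polar_in_sector[of t \<alpha>] _ _ assms(2,3)]] assms alpha
  by (simp add: norm_mult power2_eq_square mult_ac)

lemma absolutely_integrable_gauss_damped_ray:
  assumes "0 \<le> e" "e \<le> cos \<alpha>"
  shows "(\<lambda>t. gauss_damped e y0 (of_real t * cis \<alpha>)) absolutely_integrable_on {0<..}"
proof (rule absolutely_integrable_Ioi_gaussian_bound[where C = A and b = B])
  show "continuous_on {0<..} (\<lambda>t. gauss_damped e y0 (of_real t * cis \<alpha>))"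
    using alpha by (intro continuous_on_gauss_damped_path continuous_intros) (auto intro!: polar_in_sector)
  show "0 < cos \<alpha> * sin \<alpha>" using cos_alpha_pos sin_alpha_pos by simp
qed (use norm_gauss_damped_ray_le assms in auto)

lemma absolutely_integrable_gauss_damped_real:
  assumes "0 < e"
  shows "(\<lambda>y. gauss_damped e y0 (of_real y)) absolutely_integrable_on {0<..}"
proof (rule absolutely_integrable_Ioi_gaussian_bound[where b = "B + 2 * e * \<bar>y0\<bar>"])
  show "continuous_on {0<..} (\<lambda>y. gauss_damped e y0 (of_real y))"
    by (intro continuous_on_gauss_damped_path continuous_intros) (auto intro!: real_in_sector)
  fix y :: real assume "0 < y"
  then show "norm (gauss_damped e y0 (of_real y)) \<le> A * exp ((B + 2 * e * \<bar>y0\<bar>) * y - e * y^2)"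
    using norm_gauss_damped_le(2)[OF real_in_sector, of y e y0] assms
    by (simp add: algebra_simps)
qed (use assms in simp)

lemma gauss_damped_arc_tendsto_0:
  assumes e: "0 < e" "e \<le> cos \<alpha>"
  shows "((\<lambda>R. contour_integral (part_circlepath 0 R 0 \<alpha>) (gauss_damped e y0)) \<longlongrightarrow> 0) at_top"
proof (rule Lim_null_comparison)
  define M where "M R = A * \<alpha> * R * exp ((B + 2 * e * \<bar>y0\<bar>) * R - e * R^2)" for R
  show "(M \<longlongrightarrow> 0) at_top" unfolding M_def using e(1) by real_asymp
  show "\<forall>\<^sub>F R in at_top. norm (contour_integral (part_circlepath 0 R 0 \<alpha>) (gauss_damped e y0)) \<le> M R"
    using eventually_gt_at_top[of 0]
  proof eventually_elim
    case (elim R)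
    have arc: "z \<in> sector_plus \<alpha> \<and> norm z = R" if "z \<in> path_image (part_circlepath 0 R 0 \<alpha>)" for z
      using that elim alpha
      by (auto simp: path_image_part_circlepath' closed_segment_eq_real_ivl norm_mult intro!: polar_in_sector)
    have "norm (contour_integral (part_circlepath 0 R 0 \<alpha>) (gauss_damped e y0))
        \<le> A * exp (B * R - e * R^2 + 2 * e * \<bar>y0\<bar> * R) * R * \<bar>\<alpha> - 0\<bar>"
    proof (rule contour_integral_bound_part_circlepath)
      show "gauss_damped e y0 contour_integrable_on part_circlepath 0 R 0 \<alpha>"
        using arc holomorphic_gauss_damped[THEN holomorphic_on_imp_continuous_on]
        by (intro contour_integrable_continuous_part_circlepath) (auto intro: continuous_on_subset)
      fix z assume "z \<in> path_image (part_circlepath 0 R 0 \<alpha>)"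
      with arc e alpha show "norm (gauss_damped e y0 z) \<le> A * exp (B * R - e * R^2 + 2 * e * \<bar>y0\<bar> * R)"
        using norm_gauss_damped_le(2)[of z e y0] sector_plus_mult_Im_le_Re[of z \<alpha> e] by auto
    qed (use elim nonneg in auto)
    then show ?case using alpha by (simp add: M_def algebra_simps)
  qed
qed

lemma integral_gauss_damped_real_eq_ray:
  assumes e: "0 < e" "e \<le> cos \<alpha>"
  shows "integral {0<..} (\<lambda>y. gauss_damped e y0 (of_real y))
       = cis \<alpha> * integral {0<..} (\<lambda>t. gauss_damped e y0 (of_real t * cis \<alpha>))"
proof (rule tendsto_unique[OF trivial_limit_at_top_linorder])
  show "((\<lambda>R. integral {0..R} (\<lambda>y. gauss_damped e y0 (of_real y)))
      \<longlongrightarrow> integral {0<..} (\<lambda>y. gauss_damped e y0 (of_real y))) at_top"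
    using e by (intro tendsto_integral_atLeastAtMost_at_top absolutely_integrable_gauss_damped_real)
  show "((\<lambda>R. integral {0..R} (\<lambda>y. gauss_damped e y0 (of_real y)))
      \<longlongrightarrow> cis \<alpha> * integral {0<..} (\<lambda>t. gauss_damped e y0 (of_real t * cis \<alpha>))) at_top"
    using alpha e
    by (intro sector_integral_tendsto holomorphic_gauss_damped absolutely_integrable_gauss_damped_ray
        gauss_damped_arc_tendsto_0) auto
qed

lemma tendsto_integral_gauss_damped:
  "((\<lambda>e. integral {0<..} (\<lambda>y. gauss_damped e y0 (of_real y)))
     \<longlongrightarrow> cis \<alpha> * integral {0<..} (\<lambda>t. chirp (of_real t * cis \<alpha>))) (at_right 0)"
proof -
  define w where "w t = A * exp (B * t - cos \<alpha> * sin \<alpha> * t^2)" for t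
  have "w absolutely_integrable_on {0<..}"
    using cos_alpha_pos sin_alpha_pos nonneg unfolding w_def
    by (intro absolutely_integrable_Ioi_gaussian_bound[where C = A and b = B and q = "cos \<alpha> * sin \<alpha>"]
        continuous_intros) auto
  then have "((\<lambda>e. integral {0<..} (\<lambda>t. gauss_damped e y0 (of_real t * cis \<alpha>)))
      \<longlongrightarrow> integral {0<..} (\<lambda>t. gauss_damped 0 y0 (of_real t * cis \<alpha>))) (at_right 0)"
  proof (intro tendsto_integral_dominated_at_right[OF cos_alpha_pos])
    show "(\<lambda>t. gauss_damped e y0 (of_real t * cis \<alpha>)) integrable_on {0<..}" if "0 < e" "e < cos \<alpha>" for e
      using absolutely_integrable_gauss_damped_ray[of e y0] that by (simp add: absolutely_integrable_on_def)
    show "norm (gauss_damped e y0 (of_real t * cis \<alpha>)) \<le> w t" if "0 < e" "e < cos \<alpha>" "t \<in> {0<..}" for e t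
      using norm_gauss_damped_ray_le[of t e y0] that unfolding w_def by simp
    show "((\<lambda>e. gauss_damped e y0 (of_real t * cis \<alpha>)) \<longlongrightarrow> gauss_damped 0 y0 (of_real t * cis \<alpha>)) (at_right 0)" for t
    proof -
      have "isCont (\<lambda>e. gauss_damped e y0 (of_real t * cis \<alpha>)) 0"
        unfolding gauss_damped_def by (intro continuous_intros)
      then show ?thesis unfolding isCont_def by (rule tendsto_mono[OF at_within_le_at])
    qed
  qed (simp add: absolutely_integrable_on_def)
  then have "((\<lambda>e. cis \<alpha> * integral {0<..} (\<lambda>t. gauss_damped e y0 (of_real t * cis \<alpha>)))
      \<longlongrightarrow> cis \<alpha> * integral {0<..} (\<lambda>t. chirp (of_real t * cis \<alpha>))) (at_right 0)"
    by (intro tendsto_mult_left) simp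
  moreover have "\<forall>\<^sub>F e in at_right 0. cis \<alpha> * integral {0<..} (\<lambda>t. gauss_damped e y0 (of_real t * cis \<alpha>))
      = integral {0<..} (\<lambda>y. gauss_damped e y0 (of_real y))"
    using eventually_at_right_real[OF cos_alpha_pos]
    by eventually_elim (simp add: integral_gauss_damped_real_eq_ray)
  ultimately show ?thesis by (simp add: tendsto_cong)
qed

lemma norm_chirp_arc_le:
  assumes growth_Im: "\<And>z. z \<in> sector_plus \<alpha> \<Longrightarrow> norm (f z) \<le> A * exp (B * Im z)"
    and R: "0 < R" "B \<le> R * cos \<alpha>"
  shows "norm (contour_integral (part_circlepath 0 R 0 \<alpha>) chirp) \<le> A / (cos \<alpha> ^ 2 * R)"
proof -
  define k where "k = (R * cos \<alpha>)^2"
  have k: "0 < k" using R cos_alpha_pos by (simp add: k_def)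
  have pointwise: "norm (chirp (of_real R * cis \<theta>) * of_real R * \<i> * cis \<theta>) \<le> R * A * exp (- k * \<theta>)"
    if \<theta>: "\<theta> \<in> {0..\<alpha>}" for \<theta>
  proof -
    define z where "z = of_real R * cis \<theta>"
    have z: "z \<in> sector_plus \<alpha>" using \<theta> R unfolding z_def by (intro polar_in_sector) auto
    have Re: "R * cos \<alpha> \<le> Re z"
      using sector_plus_bounds(2)[OF z] alpha R by (simp add: z_def norm_mult)
    have Im: "Im z = R * sin \<theta>" "0 \<le> sin \<theta>" using \<theta> alpha by (auto simp: z_def intro!: sin_ge_zero)
    have "k * \<theta> = R * cos \<alpha> * (R * (\<theta> * cos \<alpha>))" by (simp add: k_def power2_eq_square)
    also have "\<dots> \<le> Re z * Im z"
      using sin_ge_mult_cos[of \<theta> \<alpha>] \<theta> alpha R Re Im cos_alpha_pos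
      by (intro mult_mono) (auto intro: order_trans[OF _ Re])
    finally have k\<theta>: "k * \<theta> \<le> Re z * Im z" .
    have BIm: "B * Im z \<le> Re z * Im z" using R Re Im by (intro mult_right_mono) auto
    have "norm (chirp z) \<le> exp (- 2 * Re z * Im z) * (A * exp (B * Im z))"
      unfolding chirp_def norm_mult norm_exp_ii_power2 using growth_Im[OF z] by (intro mult_left_mono) auto
    also have "\<dots> = A * exp (B * Im z - 2 * Re z * Im z)" by (simp add: mult_ac flip: exp_add)
    also have "\<dots> \<le> A * exp (- k * \<theta>)" using k\<theta> BIm nonneg by (intro mult_left_mono) auto
    finally have "norm (chirp z) \<le> A * exp (- k * \<theta>)" .
    moreover have "norm (chirp z * of_real R * \<i> * cis \<theta>) = R * norm (chirp z)"
      using R by (simp add: norm_mult)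
    ultimately show ?thesis using R unfolding z_def by (simp add: mult_left_mono)
  qed
  have "continuous_on {0..\<alpha>} (\<lambda>\<theta>. gauss_damped 0 0 (of_real R * cis \<theta>))"
    using R by (intro continuous_on_gauss_damped_path continuous_intros) (auto intro!: polar_in_sector)
  then have cont: "continuous_on {0..\<alpha>} (\<lambda>\<theta>. chirp (of_real R * cis \<theta>))" by simp
  have "norm (contour_integral (part_circlepath 0 R 0 \<alpha>) chirp)
      = norm (integral {0..\<alpha>} (\<lambda>\<theta>. chirp (of_real R * cis \<theta>) * of_real R * \<i> * cis \<theta>))"
    using alpha by (simp add: contour_integral_part_circlepath_eq)
  also have "\<dots> \<le> integral {0..\<alpha>} (\<lambda>\<theta>. R * A * exp (- k * \<theta>))"
    using cont pointwise
    by (intro integral_norm_bound_integral integrable_continuous_interval continuous_intros) auto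
  also have "\<dots> = R * A * integral {0..\<alpha>} (\<lambda>\<theta>. exp (- k * \<theta>))" by simp
  also have "\<dots> \<le> R * A * (1 / k)"
    using integral_exp_minus_le[OF k, of \<alpha>] alpha R nonneg by (intro mult_left_mono) auto
  also have "\<dots> = A / (cos \<alpha> ^ 2 * R)" using R by (simp add: k_def power2_eq_square field_simps)
  finally show ?thesis .
qed

lemma tendsto_integral_chirp:
  assumes growth_Im: "\<And>z. z \<in> sector_plus \<alpha> \<Longrightarrow> norm (f z) \<le> A * exp (B * Im z)"
  shows "((\<lambda>R. integral {0..R} (\<lambda>x. chirp (of_real x)))
           \<longlongrightarrow> cis \<alpha> * integral {0<..} (\<lambda>t. chirp (of_real t * cis \<alpha>))) at_top"
proof (rule sector_integral_tendsto)
  show "(\<lambda>t. chirp (of_real t * cis \<alpha>)) absolutely_integrable_on {0<..}"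
    using absolutely_integrable_gauss_damped_ray[of 0 0] cos_alpha_pos by simp
  show "((\<lambda>R. contour_integral (part_circlepath 0 R 0 \<alpha>) chirp) \<longlongrightarrow> 0) at_top"
  proof (rule Lim_null_comparison)
    show "((\<lambda>R. A / (cos \<alpha> ^ 2 * R)) \<longlongrightarrow> 0) at_top"
      using cos_alpha_pos
      by (intro tendsto_divide_0[OF tendsto_const] filterlim_at_top_imp_at_infinity
          filterlim_tendsto_pos_mult_at_top[OF tendsto_const] filterlim_ident) simp
    show "\<forall>\<^sub>F R in at_top. norm (contour_integral (part_circlepath 0 R 0 \<alpha>) chirp) \<le> A / (cos \<alpha> ^ 2 * R)"
      using eventually_ge_at_top[of "max 1 (B / cos \<alpha>)"]
    proof eventually_elim
      case (elim R)
      then have "0 < R" "B \<le> R * cos \<alpha>" using cos_alpha_pos by (auto simp: field_simps)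
      then show ?case by (intro norm_chirp_arc_le growth_Im)
    qed
  qed
qed (use alpha holomorphic_chirp in auto)

lemma gauss_damped_of_real:
  "gauss_damped e y0 (of_real y)
     = complex_of_real (exp (- e * (y - y0)^2)) * exp (\<i> * (complex_of_real y)^2) * f (complex_of_real y)"
proof -
  have "exp (- of_real e * (of_real y - of_real y0)^2) = exp (complex_of_real (- e * (y - y0)^2))" by simp
  then show ?thesis by (simp only: gauss_damped_def chirp_def exp_of_real mult.assoc)
qed

lemma gaussian_regularized_limit:
  "(\<forall>\<epsilon>>0. (\<lambda>y::real. complex_of_real (exp (- \<epsilon> * (y - y0)^2)) * exp (\<i> * (complex_of_real y)^2) * f (complex_of_real y))
            absolutely_integrable_on {0<..}) \<and>
   (\<lambda>y::real. exp (\<i> * (complex_of_real y * exp (\<i> * complex_of_real \<alpha>))^2) * f (complex_of_real y * exp (\<i> * complex_of_real \<alpha>)))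
            absolutely_integrable_on {0<..} \<and>
   ((\<lambda>\<epsilon>. integral {0<..} (\<lambda>y::real. complex_of_real (exp (- \<epsilon> * (y - y0)^2)) * exp (\<i> * (complex_of_real y)^2) * f (complex_of_real y)))
      \<longlongrightarrow> exp (\<i> * complex_of_real \<alpha>) * integral {0<..} (\<lambda>y::real. exp (\<i> * (complex_of_real y * exp (\<i> * complex_of_real \<alpha>))^2) * f (complex_of_real y * exp (\<i> * complex_of_real \<alpha>))))
      (at_right 0)"
  using absolutely_integrable_gauss_damped_real[of _ y0] absolutely_integrable_gauss_damped_ray[of 0 0]
    tendsto_integral_gauss_damped[of y0] cos_alpha_pos
  unfolding cis_conv_exp[symmetric] by (simp add: gauss_damped_of_real chirp_def)

lemma truncated_limit:
  assumes growth_Im: "\<And>z. z \<in> sector_plus \<alpha> \<Longrightarrow> norm (f z) \<le> A * exp (B * Im z)"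
  shows
   "(\<forall>R>0. (\<lambda>y::real. exp (\<i> * (complex_of_real y)^2) * f (complex_of_real y)) absolutely_integrable_on {0<..<R}) \<and>
    (\<lambda>y::real. exp (\<i> * (complex_of_real y * exp (\<i> * complex_of_real \<alpha>))^2) * f (complex_of_real y * exp (\<i> * complex_of_real \<alpha>)))
            absolutely_integrable_on {0<..} \<and>
    ((\<lambda>R. integral {0<..<R} (\<lambda>y::real. exp (\<i> * (complex_of_real y)^2) * f (complex_of_real y)))
      \<longlongrightarrow> exp (\<i> * complex_of_real \<alpha>) * integral {0<..} (\<lambda>y::real. exp (\<i> * (complex_of_real y * exp (\<i> * complex_of_real \<alpha>))^2) * f (complex_of_real y * exp (\<i> * complex_of_real \<alpha>))))
      at_top"
proof -
  have "(\<lambda>y. chirp (of_real y)) absolutely_integrable_on {0<..<R}" for R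
  proof -
    have "continuous_on {0..R} (\<lambda>y. gauss_damped 0 0 (of_real y))"
      by (intro continuous_on_gauss_damped_path continuous_intros) (auto intro!: real_in_sector)
    then have "(\<lambda>y. chirp (of_real y)) absolutely_integrable_on {0..R}"
      by (intro absolutely_integrable_continuous_real) simp
    then show ?thesis by (rule set_integrable_subset) auto
  qed
  then show ?thesis
    using absolutely_integrable_gauss_damped_ray[of 0 0] tendsto_integral_chirp[OF growth_Im] cos_alpha_pos
    unfolding cis_conv_exp[symmetric] by (simp add: chirp_def flip: integral_open_interval_real)
qed

end

theorem proposition2p1:
  fixes \<alpha> :: real and f :: "complex \<Rightarrow> complex" and \<Omega> :: "complex set"
  assumes "0 < \<alpha>" and "\<alpha> < pi / 2"
    and "open \<Omega>" and "sector_plus \<alpha> \<subseteq> \<Omega>" and "f holomorphic_on \<Omega>"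
  shows
  "((\<exists>A B. A \<ge> 0 \<and> B \<ge> 0 \<and> (\<forall>z\<in>sector_plus \<alpha>. norm (f z) \<le> A * exp (B * norm z))) \<longrightarrow>
     (\<forall>y0::real.
        (\<forall>\<epsilon>>0. (\<lambda>y::real. complex_of_real (exp (- \<epsilon> * (y - y0)^2)) * exp (\<i> * (complex_of_real y)^2) * f (complex_of_real y))
                  absolutely_integrable_on {0<..}) \<and>
        (\<lambda>y::real. exp (\<i> * (complex_of_real y * exp (\<i> * complex_of_real \<alpha>))^2) * f (complex_of_real y * exp (\<i> * complex_of_real \<alpha>)))
                  absolutely_integrable_on {0<..} \<and>
        ((\<lambda>\<epsilon>. integral {0<..} (\<lambda>y::real. complex_of_real (exp (- \<epsilon> * (y - y0)^2)) * exp (\<i> * (complex_of_real y)^2) * f (complex_of_real y)))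
          \<longlongrightarrow> exp (\<i> * complex_of_real \<alpha>) * integral {0<..} (\<lambda>y::real. exp (\<i> * (complex_of_real y * exp (\<i> * complex_of_real \<alpha>))^2) * f (complex_of_real y * exp (\<i> * complex_of_real \<alpha>))))
          (at_right 0)))
   \<and>
   ((\<exists>A B. A \<ge> 0 \<and> B \<ge> 0 \<and> (\<forall>z\<in>sector_plus \<alpha>. norm (f z) \<le> A * exp (B * Im z))) \<longrightarrow>
     (\<forall>R>0. (\<lambda>y::real. exp (\<i> * (complex_of_real y)^2) * f (complex_of_real y)) absolutely_integrable_on {0<..<R}) \<and>
     (\<lambda>y::real. exp (\<i> * (complex_of_real y * exp (\<i> * complex_of_real \<alpha>))^2) * f (complex_of_real y * exp (\<i> * complex_of_real \<alpha>)))
                  absolutely_integrable_on {0<..} \<and>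
     ((\<lambda>R. integral {0<..<R} (\<lambda>y::real. exp (\<i> * (complex_of_real y)^2) * f (complex_of_real y)))
        \<longlongrightarrow> exp (\<i> * complex_of_real \<alpha>) * integral {0<..} (\<lambda>y::real. exp (\<i> * (complex_of_real y * exp (\<i> * complex_of_real \<alpha>))^2) * f (complex_of_real y * exp (\<i> * complex_of_real \<alpha>))))
        at_top)"
proof -
  have hol: "f holomorphic_on sector_plus \<alpha>" using assms(5,4) by (rule holomorphic_on_subset)
  have exp_type: "sector_exponential_type \<alpha> A B f"
    if "0 \<le> A" "0 \<le> B" "\<forall>z\<in>sector_plus \<alpha>. norm (f z) \<le> A * exp (B * norm z)" for A B
    using that assms(1,2) hol by unfold_locales auto
  have Im_exp_type: "sector_exponential_type \<alpha> A B f"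
    if AB: "0 \<le> A" "0 \<le> B" "\<forall>z\<in>sector_plus \<alpha>. norm (f z) \<le> A * exp (B * Im z)" for A B
  proof (rule exp_type[OF AB(1,2)], intro ballI)
    fix z assume "z \<in> sector_plus \<alpha>"
    then have "norm (f z) \<le> A * exp (B * Im z)" using AB(3) by blast
    also have "\<dots> \<le> A * exp (B * norm z)"
      using AB(1,2) abs_Im_le_cmod[of z] by (intro mult_left_mono) (auto intro: mult_left_mono)
    finally show "norm (f z) \<le> A * exp (B * norm z)" .
  qed
  show ?thesis
    using sector_exponential_type.gaussian_regularized_limit[OF exp_type]
      sector_exponential_type.truncated_limit[OF Im_exp_type]
    by blast
qed

end
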